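(* Let $(X,s)$ be a complete strong partial metric space, let $x_o\in X$, and let $f:X\to X$ be a Cauchy function at $x_o$. If $f$ is non-expansive, then $f$ has a fixed point.
   Context: A strong partial metric on $X$ is $s:X\times X\to\mathbb{R}$ with, for all $x,y,z$: $s(x,x)<s(x,y)$ whenever $x\neq y$; $s(x,y)=s(y,x)$; $s(x,y)\le s(x,z)+s(z,y)-s(z,z)$. A point $a$ is a limit of $\{x_i\}$ iff for every $\epsilon>0$ there is $N$ with $s(a,x_i)-s(a,a)<\epsilon$ for all $i>N$ (convergence in the topology generated by the balls $\{y\mid s(x,y)-s(x,x)<\epsilon\}$). $\{x_i\}$ is Cauchy with central distance $r$ if for every $\epsilon>0$ there is $N$ with $|s(x_i,x_j)-r|<\epsilon$ for $i\ge j>N$; a special limit is a limit $a$ with $s(a,a)=r$; $(X,s)$ is complete if every Cauchy sequence has a special limit. $f$ is a Cauchy function at $x_o$ if the orbit $\{f^i(x_o)\}$ ($f^0(x_o)=x_o$, $f^{i+1}(x_o)=f(f^i(x_o))$) is Cauchy. $f$ is non-expansive if $s(f(x),f(y))\le s(x,y)$ for all $x,y$. *)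

theory Defs
  imports Main "HOL.Real"
begin

definition strong_partial_metric :: "('a \<Rightarrow> 'a \<Rightarrow> real) \<Rightarrow> bool" where
  "strong_partial_metric s \<longleftrightarrow>
     (\<forall>x y. x \<noteq> y \<longrightarrow> s x x < s x y) \<and>
     (\<forall>x y. s x y = s y x) \<and>
     (\<forall>x y z. s x y \<le> s x z + s z y - s z z)"

definition spm_limit :: "('a \<Rightarrow> 'a \<Rightarrow> real) \<Rightarrow> (nat \<Rightarrow> 'a) \<Rightarrow> 'a \<Rightarrow> bool" where
  "spm_limit s x a \<longleftrightarrow>
     (\<forall>\<epsilon>>0. \<exists>N. \<forall>i>N. s a (x i) - s a a < \<epsilon>)"

definition spm_cauchy_with :: "('a \<Rightarrow> 'a \<Rightarrow> real) \<Rightarrow> (nat \<Rightarrow> 'a) \<Rightarrow> real \<Rightarrow> bool" where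
  "spm_cauchy_with s x r \<longleftrightarrow>
     (\<forall>\<epsilon>>0. \<exists>N. \<forall>i j. i \<ge> j \<and> j > N \<longrightarrow> \<bar>s (x i) (x j) - r\<bar> < \<epsilon>)"

definition spm_cauchy :: "('a \<Rightarrow> 'a \<Rightarrow> real) \<Rightarrow> (nat \<Rightarrow> 'a) \<Rightarrow> bool" where
  "spm_cauchy s x \<longleftrightarrow> (\<exists>r. spm_cauchy_with s x r)"

definition spm_complete :: "('a \<Rightarrow> 'a \<Rightarrow> real) \<Rightarrow> bool" where
  "spm_complete s \<longleftrightarrow>
     (\<forall>x r. spm_cauchy_with s x r \<longrightarrow> (\<exists>a. spm_limit s x a \<and> s a a = r))"

definition cauchy_function_at :: "('a \<Rightarrow> 'a \<Rightarrow> real) \<Rightarrow> ('a \<Rightarrow> 'a) \<Rightarrow> 'a \<Rightarrow> bool" where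
  "cauchy_function_at s f x0 \<longleftrightarrow> spm_cauchy s (\<lambda>i. (f ^^ i) x0)"

definition non_expansive :: "('a \<Rightarrow> 'a \<Rightarrow> real) \<Rightarrow> ('a \<Rightarrow> 'a) \<Rightarrow> bool" where
  "non_expansive s f \<longleftrightarrow> (\<forall>x y. s (f x) (f y) \<le> s x y)"

end

theory Submission
  imports Defs
begin

text \<open>Let \<open>a\<close> be a special limit of the orbit \<open>x\<^sub>i = f\<^sup>i x\<^sub>0\<close>, with \<open>s a a = r\<close>. The triangle
inequality through \<open>x\<^sub>k\<^sub>+\<^sub>1 = f x\<^sub>k\<close> and non-expansiveness give
\<open>s a (f a) \<le> s a x\<^sub>k\<^sub>+\<^sub>1 + s x\<^sub>k a - s x\<^sub>k\<^sub>+\<^sub>1 x\<^sub>k\<^sub>+\<^sub>1\<close>; as \<open>k \<rightarrow> \<infinity>\<close> the first two terms are eventually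
below \<open>r + \<epsilon>\<close> and the last, a diagonal value of a Cauchy sequence with central distance \<open>r\<close>, is
above \<open>r - \<epsilon>\<close>. Hence \<open>s a (f a) \<le> s a a\<close>, which forces \<open>f a = a\<close> in a strong partial metric.\<close>

lemma strong_partial_metricD:
  assumes "strong_partial_metric s"
  shows strong_partial_metric_less: "x \<noteq> y \<Longrightarrow> s x x < s x y"
    and strong_partial_metric_sym: "s x y = s y x"
    and strong_partial_metric_triangle: "s x y \<le> s x z + s z y - s z z"
  using assms unfolding strong_partial_metric_def by blast+

lemma strong_partial_metric_eqI:
  assumes "strong_partial_metric s" and "s x y \<le> s x x"
  shows "x = y"
  using assms strong_partial_metric_less by fastforce

lemma non_expansive_displacement_le:
  assumes "strong_partial_metric s" and "non_expansive s f"
  shows "s a (f a) \<le> s a (f b) + s b a - s (f b) (f b)"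
proof -
  have "s a (f a) \<le> s a (f b) + s (f b) (f a) - s (f b) (f b)"
    using assms(1) by (rule strong_partial_metric_triangle)
  moreover have "s (f b) (f a) \<le> s b a"
    using assms(2) unfolding non_expansive_def by blast
  ultimately show ?thesis by linarith
qed

lemma special_limit_of_orbit_is_fixed_point:
  assumes spm: "strong_partial_metric s" and ne: "non_expansive s f"
    and cauchy: "spm_cauchy_with s (\<lambda>i. (f ^^ i) x0) r"
    and lim: "spm_limit s (\<lambda>i. (f ^^ i) x0) a" and special: "s a a = r"
  shows "f a = a"
proof -
  let ?x = "\<lambda>i. (f ^^ i) x0"
  have approx: "s a (f a) \<le> s a a + 3 * \<epsilon>" if "\<epsilon> > 0" for \<epsilon>
  proof -
    obtain N1 where N1: "\<And>i. i > N1 \<Longrightarrow> s a (?x i) - s a a < \<epsilon>"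
      using lim \<open>\<epsilon> > 0\<close> unfolding spm_limit_def by blast
    obtain N2 where N2: "\<And>i j. i \<ge> j \<Longrightarrow> j > N2 \<Longrightarrow> \<bar>s (?x i) (?x j) - r\<bar> < \<epsilon>"
      using cauchy \<open>\<epsilon> > 0\<close> unfolding spm_cauchy_with_def by blast
    define k where "k = Suc (N1 + N2)"
    have "s a (f (?x k)) < r + \<epsilon>"
      using N1[of "Suc k"] special by (simp add: k_def)
    moreover have "s (?x k) a < r + \<epsilon>"
      using N1[of k] special strong_partial_metric_sym[OF spm] by (simp add: k_def)
    moreover have "s (f (?x k)) (f (?x k)) > r - \<epsilon>"
      using N2[of "Suc k" "Suc k"] by (simp add: k_def)
    ultimately show ?thesis
      using non_expansive_displacement_le[OF spm ne, of a "?x k"] special by linarith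
  qed
  have "s a (f a) \<le> s a a + \<epsilon>" if "\<epsilon> > 0" for \<epsilon>
    using approx[of "\<epsilon> / 3"] that by simp
  then have "s a (f a) \<le> s a a"
    by (rule field_le_epsilon)
  then show ?thesis
    using strong_partial_metric_eqI[OF spm] by metis
qed

theorem theorem7p12:
  fixes s :: "'a \<Rightarrow> 'a \<Rightarrow> real" and f :: "'a \<Rightarrow> 'a" and x0 :: 'a
  assumes "strong_partial_metric s"
    and "spm_complete s"
    and "cauchy_function_at s f x0"
    and "non_expansive s f"
  shows "\<exists>x. f x = x"
proof -
  obtain r where cauchy: "spm_cauchy_with s (\<lambda>i. (f ^^ i) x0) r"
    using assms(3) unfolding cauchy_function_at_def spm_cauchy_def by blast
  then obtain a where "spm_limit s (\<lambda>i. (f ^^ i) x0) a" and "s a a = r"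
    using assms(2) unfolding spm_complete_def by blast
  then have "f a = a"
    using special_limit_of_orbit_is_fixed_point[OF assms(1,4) cauchy] by blast
  then show ?thesis ..
qed

end
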